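(* Let $\theta^*\in\mathbb{R}^{n\times n}$ be given by $\theta^*_{ij}=1$ if $j>n/2$ and $0$ otherwise, and let $V^* = \mathrm{TV}(\theta^* )$. There is a universal constant $c>0$ such that $$\mathrm{GW}\big(T_{K(V^* )}(\theta^* )\cap B_{n,n}(1)\big) \geq c\,n^{1/4}.$$
   Context: $\mathrm{TV}(\theta)$ is the unnormalized total variation of $\theta$ (sum of absolute differences over horizontally/vertically adjacent entries), $K(V) = \{\theta\in\mathbb{R}^{n\times n}: \mathrm{TV}(\theta)\le V\}$, and $T_{K(V^* )}(\theta^* ) = \mathrm{Closure}(\mathrm{Cone}(\{\theta:\theta^*+\theta\in K(V^* )\}))$ is the tangent cone ($\mathrm{Cone}(S)$ the smallest cone containing $S$). $B_{n,n}(1)$ is the unit Frobenius ball in $\mathbb{R}^{n\times n}$. $\mathrm{GW}(A) = \mathbb{E}\sup_{v\in A}\langle Z,v\rangle$ with $Z$ having i.i.d. standard normal entries. *)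

theory Defs
  imports "HOL-Probability.Probability"
begin

text \<open>n x n real matrices are represented as functions nat \<Rightarrow> nat \<Rightarrow> real,
  with rows/columns indexed by 0..n-1; entries outside the index range are required to be 0.\<close>

definition mats :: "nat \<Rightarrow> (nat \<Rightarrow> nat \<Rightarrow> real) set" where
  "mats n = {\<theta>. \<forall>i j. \<not> (i < n \<and> j < n) \<longrightarrow> \<theta> i j = 0}"

definition TV :: "nat \<Rightarrow> (nat \<Rightarrow> nat \<Rightarrow> real) \<Rightarrow> real" where
  "TV n \<theta> = (\<Sum>i<n. \<Sum>j<n - 1. \<bar>\<theta> i (j+1) - \<theta> i j\<bar>)
           + (\<Sum>i<n - 1. \<Sum>j<n. \<bar>\<theta> (i+1) j - \<theta> i j\<bar>)"

definition K :: "nat \<Rightarrow> real \<Rightarrow> (nat \<Rightarrow> nat \<Rightarrow> real) set" where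
  "K n V = {\<theta> \<in> mats n. TV n \<theta> \<le> V}"

definition frob :: "nat \<Rightarrow> (nat \<Rightarrow> nat \<Rightarrow> real) \<Rightarrow> real" where
  "frob n \<theta> = sqrt (\<Sum>i<n. \<Sum>j<n. (\<theta> i j)\<^sup>2)"

definition cone_gen :: "(nat \<Rightarrow> nat \<Rightarrow> real) set \<Rightarrow> (nat \<Rightarrow> nat \<Rightarrow> real) set" where
  "cone_gen S = {(\<lambda>i j. t * s i j) | t s. t \<ge> 0 \<and> s \<in> S}"

definition mclosure :: "nat \<Rightarrow> (nat \<Rightarrow> nat \<Rightarrow> real) set \<Rightarrow> (nat \<Rightarrow> nat \<Rightarrow> real) set" where
  "mclosure n S = {\<theta> \<in> mats n. \<forall>\<epsilon>>0. \<exists>\<phi>\<in>S. frob n (\<lambda>i j. \<theta> i j - \<phi> i j) < \<epsilon>}"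

definition tangent_cone :: "nat \<Rightarrow> real \<Rightarrow> (nat \<Rightarrow> nat \<Rightarrow> real) \<Rightarrow> (nat \<Rightarrow> nat \<Rightarrow> real) set" where
  "tangent_cone n V \<theta>s =
     mclosure n (cone_gen {\<theta> \<in> mats n. (\<lambda>i j. \<theta>s i j + \<theta> i j) \<in> K n V})"

definition unit_ball :: "nat \<Rightarrow> (nat \<Rightarrow> nat \<Rightarrow> real) set" where
  "unit_ball n = {\<theta> \<in> mats n. frob n \<theta> \<le> 1}"

definition gauss_matrix :: "nat \<Rightarrow> (nat \<times> nat \<Rightarrow> real) measure" where
  "gauss_matrix n = PiM ({..<n} \<times> {..<n}) (\<lambda>_. density lborel std_normal_density)"

definition GW :: "nat \<Rightarrow> (nat \<Rightarrow> nat \<Rightarrow> real) set \<Rightarrow> real" where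
  "GW n A = (\<integral>Z. (SUP v\<in>A. \<Sum>i<n. \<Sum>j<n. Z (i, j) * v i j) \<partial>gauss_matrix n)"

text \<open>theta*: entry (i,j) (1-indexed) is 1 iff j > n/2. With 0-indexing, column j
  corresponds to j+1.\<close>
definition theta_star :: "nat \<Rightarrow> nat \<Rightarrow> nat \<Rightarrow> real" where
  "theta_star n i j = (if i < n \<and> j < n \<and> real (j + 1) > real n / 2 then 1 else 0)"

end

theory Submission
  imports Defs "HOL-Library.Discrete_Functions"
begin

(*
  Let m = n div 2, so that every row of theta_star jumps from 0 to 1 between the columns
  m - 1 and m, and TV(theta_star) = n. Raising the zero half of theta_star by c >= 0 and the
  column m - 1 additionally by d_i in [0, 1 - c] keeps every row monotone: the horizontal
  variation drops by n c, and a vertical variation sum_i |d_(i+1) - d_i| appears. Such a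
  direction is therefore feasible as soon as sum_i |d_(i+1) - d_i| <= n c.

  Cut the column m - 1 into b = n div r blocks of r ~ sqrt n rows and let d be 1/(3 sqrt n)
  times the indicator of the blocks on which Z has positive sum; the uniform lift
  c = b / (3 n sqrt n) pays for the at most b jumps of d. This direction lies in the unit
  ball, and its inner product with Z has expectation
  b E[max(N(0, r), 0)] / (3 sqrt n) = b sqrt r / (3 sqrt (2 pi n)), which is of order n^(1/4).
*)

section \<open>Standard Gaussian vectors\<close>

lemma product_prob_space_std_normal: "product_prob_space (\<lambda>_. std_normal_distribution)"
  unfolding product_prob_space_def product_prob_space_axioms_def product_sigma_finite_def
  using prob_space_normal_density[of 1 0] prob_space_imp_sigma_finite by auto

lemma prob_space_PiM_std_normal: "prob_space (PiM I (\<lambda>_. std_normal_distribution))"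
proof -
  interpret product_prob_space "\<lambda>_. std_normal_distribution" I
    using product_prob_space_std_normal by (simp add: product_prob_space_def)
  show ?thesis by (rule P.prob_space_axioms)
qed

lemma distr_PiM_std_normal_component:
  assumes "finite I" "j \<in> I"
  shows "distr (PiM I (\<lambda>_. std_normal_distribution)) borel (\<lambda>Z. Z j) = std_normal_distribution"
proof -
  have "distr (PiM I (\<lambda>_. std_normal_distribution)) borel (\<lambda>Z. Z j)
      = distr (PiM I (\<lambda>_. std_normal_distribution)) std_normal_distribution (\<lambda>Z. Z j)"
    by (rule distr_cong) auto
  also have "\<dots> = std_normal_distribution"
    using assms prob_space_normal_density[of 1 0] by (intro distr_PiM_component) auto
  finally show ?thesis .
qed

lemma measurable_PiM_std_normal_component:
  assumes "j \<in> I"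
  shows "(\<lambda>Z. Z j) \<in> borel_measurable (PiM I (\<lambda>_. std_normal_distribution))"
proof -
  have "sets std_normal_distribution = sets borel" by simp
  then show ?thesis
    using measurable_component_singleton[OF assms, of "\<lambda>_. std_normal_distribution"]
    by (simp cong: measurable_cong_sets)
qed

lemma distributed_PiM_std_normal_component:
  assumes "finite I" "j \<in> I"
  shows "distributed (PiM I (\<lambda>_. std_normal_distribution)) lborel (\<lambda>Z. Z j) std_normal_density"
  unfolding distributed_def
  using distr_PiM_std_normal_component[OF assms] measurable_PiM_std_normal_component[OF assms(2)]
  by (auto simp: distr_cong[of _ _ lborel borel])

lemma indep_vars_PiM_std_normal_components:
  assumes "finite I" "J \<subseteq> I" "J \<noteq> {}"
  shows "prob_space.indep_vars (PiM I (\<lambda>_. std_normal_distribution)) (\<lambda>_. borel) (\<lambda>j Z. Z j) J"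
proof -
  interpret P: product_prob_space "\<lambda>_. std_normal_distribution" I
    using product_prob_space_std_normal by (simp add: product_prob_space_def)
  let ?M = "PiM I (\<lambda>_. std_normal_distribution)"
  have "distr ?M (PiM J (\<lambda>_. borel)) (\<lambda>Z. \<lambda>j\<in>J. Z j)
      = distr ?M (PiM J (\<lambda>_. std_normal_distribution)) (\<lambda>Z. restrict Z J)"
    by (rule distr_cong) (auto intro!: sets_PiM_cong)
  also have "\<dots> = PiM J (\<lambda>_. std_normal_distribution)"
    using assms by (intro P.distr_restrict[symmetric])
  also have "\<dots> = PiM J (\<lambda>j. distr ?M borel (\<lambda>Z. Z j))"
    using assms by (intro PiM_cong) (auto simp: distr_PiM_std_normal_component)
  finally show ?thesis
    using assms measurable_PiM_std_normal_component
    by (subst P.indep_vars_iff_distr_eq_PiM') auto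
qed

lemma distributed_PiM_std_normal_sum:
  assumes "finite I" "J \<subseteq> I" "J \<noteq> {}"
  shows "distributed (PiM I (\<lambda>_. std_normal_distribution)) lborel (\<lambda>Z. \<Sum>j\<in>J. Z j)
           (normal_density 0 (sqrt (card J)))"
proof -
  interpret prob_space "PiM I (\<lambda>_. std_normal_distribution)"
    by (rule prob_space_PiM_std_normal)
  have "finite J" using assms finite_subset by blast
  then show ?thesis
    using sum_indep_normal[where X="\<lambda>j Z. Z j" and \<sigma>="\<lambda>_. 1" and \<mu>="\<lambda>_. 0", of J] assms
      indep_vars_PiM_std_normal_components[OF assms]
      distributed_PiM_std_normal_component[OF assms(1)]
    by (auto simp: subset_iff)
qed

lemma normal_density_pos_part:
  assumes "\<sigma> > 0"
  shows "has_bochner_integral lborel (\<lambda>x. normal_density 0 \<sigma> x * max x 0) (\<sigma> * sqrt (2/pi) / 2)"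
proof -
  have "has_bochner_integral lborel (\<lambda>x. normal_density 0 \<sigma> x * \<bar>x\<bar>) (\<sigma> * sqrt (2/pi))"
    using normal_moment_abs_odd[OF assms, of 0 0] by simp
  then have "has_bochner_integral lborel
      (\<lambda>x. (normal_density 0 \<sigma> x * x + normal_density 0 \<sigma> x * \<bar>x\<bar>) / 2) ((0 + \<sigma> * sqrt (2/pi)) / 2)"
    using normal_moment_nz_1[OF assms, of 0]
    by (intro has_bochner_integral_divide_zero has_bochner_integral_add)
  moreover have "(normal_density 0 \<sigma> x * x + normal_density 0 \<sigma> x * \<bar>x\<bar>) / 2
      = normal_density 0 \<sigma> x * max x 0" for x
    by (cases "x \<ge> 0") (simp_all add: algebra_simps)
  ultimately show ?thesis by simp
qed

lemma PiM_std_normal_pos_part_sum: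
  assumes "finite I" "J \<subseteq> I" "J \<noteq> {}"
  shows "integrable (PiM I (\<lambda>_. std_normal_distribution)) (\<lambda>Z. max (\<Sum>j\<in>J. Z j) 0)"
    and "(\<integral>Z. max (\<Sum>j\<in>J. Z j) 0 \<partial>PiM I (\<lambda>_. std_normal_distribution))
           = sqrt (card J) * sqrt (2/pi) / 2"
proof -
  have "card J > 0" using assms finite_subset by (auto simp: card_gt_0_iff)
  then have pos: "has_bochner_integral lborel (\<lambda>x. normal_density 0 (sqrt (card J)) x * max x 0)
      (sqrt (card J) * sqrt (2/pi) / 2)"
    by (intro normal_density_pos_part) simp
  note distr = distributed_PiM_std_normal_sum[OF assms]
  show "integrable (PiM I (\<lambda>_. std_normal_distribution)) (\<lambda>Z. max (\<Sum>j\<in>J. Z j) 0)"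
    using distributed_integrable[OF distr, of "\<lambda>x. max x 0"] pos normal_density_nonneg
    by (auto simp: has_bochner_integral_iff)
  show "(\<integral>Z. max (\<Sum>j\<in>J. Z j) 0 \<partial>PiM I (\<lambda>_. std_normal_distribution))
      = sqrt (card J) * sqrt (2/pi) / 2"
    using distributed_integral[OF distr, of "\<lambda>x. max x 0"] pos normal_density_nonneg
    by (auto simp: has_bochner_integral_iff)
qed

lemma PiM_std_normal_component:
  assumes "finite I" "j \<in> I"
  shows "integrable (PiM I (\<lambda>_. std_normal_distribution)) (\<lambda>Z. Z j)"
    and "(\<integral>Z. Z j \<partial>PiM I (\<lambda>_. std_normal_distribution)) = 0"
    and "integrable (PiM I (\<lambda>_. std_normal_distribution)) (\<lambda>Z. \<bar>Z j\<bar>)"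
proof -
  note distr = distributed_PiM_std_normal_component[OF assms]
  show "integrable (PiM I (\<lambda>_. std_normal_distribution)) (\<lambda>Z. Z j)"
    using distributed_integrable[OF distr, of "\<lambda>x. x"] integrable_std_normal_moment[of 1]
    by (simp add: normal_density_nonneg)
  show "(\<integral>Z. Z j \<partial>PiM I (\<lambda>_. std_normal_distribution)) = 0"
    using distributed_integral[OF distr, of "\<lambda>x. x"] integral_std_normal_moment_odd[of 0]
    by (simp add: normal_density_nonneg)
  show "integrable (PiM I (\<lambda>_. std_normal_distribution)) (\<lambda>Z. \<bar>Z j\<bar>)"
    using distributed_integrable[OF distr, of abs] integrable_std_normal_moment_abs[of 1]
    by (simp add: normal_density_nonneg)
qed

section \<open>Lower bounds for the Gaussian width\<close>

definition pairing :: "nat \<Rightarrow> (nat \<times> nat \<Rightarrow> real) \<Rightarrow> (nat \<Rightarrow> nat \<Rightarrow> real) \<Rightarrow> real" where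
  "pairing n Z u = (\<Sum>i<n. \<Sum>j<n. Z (i, j) * u i j)"

definition entry_l1 :: "nat \<Rightarrow> (nat \<times> nat \<Rightarrow> real) \<Rightarrow> real" where
  "entry_l1 n Z = (\<Sum>i<n. \<Sum>j<n. \<bar>Z (i, j)\<bar>)"

lemma abs_le_1_if_unit_ball:
  assumes "u \<in> unit_ball n"
  shows "\<bar>u i j\<bar> \<le> 1"
proof (cases "i < n \<and> j < n")
  case True
  have "(u i j)\<^sup>2 \<le> (\<Sum>j'<n. (u i j')\<^sup>2)"
    using True by (intro member_le_sum) auto
  also have "\<dots> \<le> (\<Sum>i'<n. \<Sum>j'<n. (u i' j')\<^sup>2)"
    using True by (intro member_le_sum[where f="\<lambda>i'. \<Sum>j'<n. (u i' j')\<^sup>2"]) (auto intro: sum_nonneg)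
  also have "\<dots> \<le> 1"
    using assms by (simp add: unit_ball_def frob_def)
  finally show ?thesis by (simp add: abs_square_le_1)
next
  case False
  then show ?thesis using assms by (auto simp: unit_ball_def mats_def)
qed

lemma abs_pairing_le_entry_l1:
  assumes "u \<in> unit_ball n"
  shows "\<bar>pairing n Z u\<bar> \<le> entry_l1 n Z"
  unfolding pairing_def entry_l1_def
  using abs_le_1_if_unit_ball[OF assms]
  by (intro order_trans[OF sum_abs] sum_mono order_trans[OF sum_abs])
     (simp add: abs_mult mult_left_le)

lemma SUP_pairing_lipschitz:
  assumes "A \<subseteq> unit_ball n" "A \<noteq> {}"
  shows "\<bar>(SUP u\<in>A. pairing n Z u) - (SUP u\<in>A. pairing n Z' u)\<bar> \<le> entry_l1 n (\<lambda>x. Z x - Z' x)"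
proof -
  have bdd: "bdd_above ((\<lambda>u. pairing n W u) ` A)" for W
    using assms(1) abs_pairing_le_entry_l1[of _ n W]
    by (intro bdd_aboveI2[where M="entry_l1 n W"]) (auto dest: abs_le_D1)
  have le: "(SUP u\<in>A. pairing n W u) \<le> (SUP u\<in>A. pairing n W' u) + entry_l1 n (\<lambda>x. W x - W' x)"
    for W W'
  proof (rule cSUP_least[OF assms(2)])
    fix u assume u: "u \<in> A"
    have "pairing n W u = pairing n W' u + pairing n (\<lambda>x. W x - W' x) u"
      unfolding pairing_def by (simp add: algebra_simps sum.distrib[symmetric])
    also have "\<dots> \<le> (SUP u\<in>A. pairing n W' u) + entry_l1 n (\<lambda>x. W x - W' x)"
      using u assms(1) abs_pairing_le_entry_l1[of u n "\<lambda>x. W x - W' x"]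
      by (intro add_mono cSUP_upper[OF u bdd]) auto
    finally show "pairing n W u \<le> (SUP u\<in>A. pairing n W' u) + entry_l1 n (\<lambda>x. W x - W' x)" .
  qed
  have "entry_l1 n (\<lambda>x. Z' x - Z x) = entry_l1 n (\<lambda>x. Z x - Z' x)"
    unfolding entry_l1_def by (simp add: abs_minus_commute)
  then show ?thesis using le[of Z Z'] le[of Z' Z] by linarith
qed

lemma abs_SUP_pairing_le_entry_l1:
  assumes "A \<subseteq> unit_ball n" "A \<noteq> {}"
  shows "\<bar>SUP u\<in>A. pairing n Z u\<bar> \<le> entry_l1 n Z"
  using SUP_pairing_lipschitz[OF assms, of Z "\<lambda>_. 0"] assms(2)
  by (simp add: pairing_def)

lemma continuous_on_SUP_pairing:
  assumes "A \<subseteq> unit_ball n" "A \<noteq> {}"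
  shows "continuous_on UNIV (\<lambda>Z. SUP u\<in>A. pairing n Z u)"
proof (intro continuous_at_imp_continuous_on ballI)
  fix Z\<^sub>0 :: "nat \<times> nat \<Rightarrow> real"
  have "continuous_on UNIV (\<lambda>Z. entry_l1 n (\<lambda>x. Z x - Z\<^sub>0 x))"
    unfolding entry_l1_def by (intro continuous_intros) auto
  then have "isCont (\<lambda>Z. entry_l1 n (\<lambda>x. Z x - Z\<^sub>0 x)) Z\<^sub>0"
    using continuous_on_eq_continuous_at[of UNIV] by auto
  then have "((\<lambda>Z. entry_l1 n (\<lambda>x. Z x - Z\<^sub>0 x)) \<longlongrightarrow> entry_l1 n (\<lambda>x. Z\<^sub>0 x - Z\<^sub>0 x)) (at Z\<^sub>0)"
    by (simp add: isCont_def)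
  then have lim: "((\<lambda>Z. entry_l1 n (\<lambda>x. Z x - Z\<^sub>0 x)) \<longlongrightarrow> 0) (at Z\<^sub>0)"
    by (simp add: entry_l1_def)
  have "((\<lambda>Z. (SUP u\<in>A. pairing n Z u) - (SUP u\<in>A. pairing n Z\<^sub>0 u)) \<longlongrightarrow> 0) (at Z\<^sub>0)"
    using SUP_pairing_lipschitz[OF assms] by (intro Lim_null_comparison[OF always_eventually lim]) simp
  then show "isCont (\<lambda>Z. SUP u\<in>A. pairing n Z u) Z\<^sub>0"
    by (simp add: isCont_def LIM_zero_iff)
qed

(* GW is a Bochner integral, hence 0 for a non-integrable supremum: the lower bound needs the
  integrability of the supremum, which comes from its Lipschitz dependence on Z. *)
lemma GW_ge_integral_pairing:
  assumes A: "A \<subseteq> unit_ball n"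
    and v: "\<And>Z. Z \<in> space (gauss_matrix n) \<Longrightarrow> v Z \<in> A"
    and int: "integrable (gauss_matrix n) (\<lambda>Z. pairing n Z (v Z))"
  shows "(\<integral>Z. pairing n Z (v Z) \<partial>gauss_matrix n) \<le> GW n A"
proof -
  let ?M = "gauss_matrix n"
  let ?F = "\<lambda>Z. SUP u\<in>A. pairing n Z u"
  obtain Z where "Z \<in> space ?M"
    using prob_space.not_empty[OF prob_space_PiM_std_normal] unfolding gauss_matrix_def by blast
  then have "A \<noteq> {}" using v by blast
  have "(\<lambda>Z. Z) \<in> borel_measurable ?M"
  proof (rule measurable_coordinatewise_then_product)
    fix x
    show "(\<lambda>Z. Z x) \<in> borel_measurable ?M"
    proof (cases "x \<in> {..<n} \<times> {..<n}")
      case True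
      then show ?thesis
        unfolding gauss_matrix_def by (rule measurable_PiM_std_normal_component)
    next
      case False
      then have "Z x = undefined" if "Z \<in> space ?M" for Z
        using that by (cases x) (auto simp: gauss_matrix_def space_PiM PiE_def extensional_def)
      then show ?thesis by (subst measurable_cong[where g="\<lambda>_. undefined"]) auto
    qed
  qed
  then have meas: "?F \<in> borel_measurable ?M"
    using borel_measurable_continuous_onI[OF continuous_on_SUP_pairing[OF A \<open>A \<noteq> {}\<close>]]
    by (rule measurable_compose)
  have "integrable ?M (entry_l1 n)"
    unfolding entry_l1_def gauss_matrix_def
    by (intro Bochner_Integration.integrable_sum PiM_std_normal_component(3)) auto
  then have "integrable ?M ?F"
  proof (rule Bochner_Integration.integrable_bound[OF _ meas], intro AE_I2)
    fix Z
    show "norm (?F Z) \<le> norm (entry_l1 n Z)"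
      using abs_SUP_pairing_le_entry_l1[OF A \<open>A \<noteq> {}\<close>, of Z] abs_ge_self[of "entry_l1 n Z"]
      unfolding real_norm_def by linarith
  qed
  moreover have "pairing n Z (v Z) \<le> ?F Z" if "Z \<in> space ?M" for Z
    using A abs_pairing_le_entry_l1[of _ n Z] v[OF that]
    by (intro cSUP_upper bdd_aboveI2[where M="entry_l1 n Z"]) (auto dest: abs_le_D1)
  ultimately show ?thesis
    unfolding GW_def pairing_def[symmetric] by (rule integral_mono[OF int])
qed

section \<open>Feasible directions at theta_star\<close>

lemma sum_abs_diff_eq_telescope:
  fixes f :: "nat \<Rightarrow> 'a::linordered_idom"
  assumes "\<And>j. j < k \<Longrightarrow> f j \<le> f (Suc j)"
  shows "(\<Sum>j<k. \<bar>f (Suc j) - f j\<bar>) = f k - f 0"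
proof -
  have "(\<Sum>j<k. \<bar>f (Suc j) - f j\<bar>) = (\<Sum>j<k. f (Suc j) - f j)"
    using assms by (intro sum.cong) (auto simp: abs_of_nonneg)
  then show ?thesis by (simp add: sum_lessThan_telescope)
qed

lemma TV_eq_if_rows_mono:
  assumes "\<And>i j. i < n \<Longrightarrow> Suc j < n \<Longrightarrow> \<theta> i j \<le> \<theta> i (Suc j)"
  shows "TV n \<theta> = (\<Sum>i<n. \<theta> i (n - 1) - \<theta> i 0) + (\<Sum>i<n - 1. \<Sum>j<n. \<bar>\<theta> (Suc i) j - \<theta> i j\<bar>)"
proof -
  have "(\<Sum>j<n - 1. \<bar>\<theta> i (Suc j) - \<theta> i j\<bar>) = \<theta> i (n - 1) - \<theta> i 0" if "i < n" for i
    using that assms by (intro sum_abs_diff_eq_telescope) auto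
  then show ?thesis unfolding TV_def by simp
qed

lemma theta_star_eq: "theta_star n i j = (if i < n \<and> j < n \<and> n div 2 \<le> j then 1 else 0)"
proof -
  have "real (j + 1) > real n / 2 \<longleftrightarrow> n div 2 \<le> j" by linarith
  then show ?thesis unfolding theta_star_def by simp
qed

lemma theta_star_in_mats: "theta_star n \<in> mats n"
  unfolding mats_def theta_star_def by auto

lemma TV_theta_star:
  assumes "2 \<le> n"
  shows "TV n (theta_star n) = n"
proof -
  have "(\<Sum>i<n - 1. \<Sum>j<n. \<bar>theta_star n (Suc i) j - theta_star n i j\<bar>) = 0"
    by (intro sum.neutral ballI) (auto simp: theta_star_eq)
  moreover have "(\<Sum>i<n. theta_star n i (n - 1) - theta_star n i 0) = (\<Sum>i<n. 1)"
    using assms by (intro sum.cong) (auto simp: theta_star_eq)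
  ultimately show ?thesis
    by (subst TV_eq_if_rows_mono) (auto simp: theta_star_eq)
qed

(* The columns j < n div 2 form the zero half of theta_star; for n >= 2 the column
  n div 2 - 1 borders the jump. *)
definition lift_direction :: "nat \<Rightarrow> real \<Rightarrow> (nat \<Rightarrow> real) \<Rightarrow> nat \<Rightarrow> nat \<Rightarrow> real" where
  "lift_direction n c d i j =
     (if i < n \<and> j < n then (if j < n div 2 then c else 0) + (if j = n div 2 - 1 then d i else 0)
      else 0)"

lemma lift_direction_in_mats: "lift_direction n c d \<in> mats n"
  unfolding mats_def lift_direction_def by auto

lemma TV_theta_star_plus_lift_direction_le:
  assumes n: "2 \<le> n" and c: "0 \<le> c" and d: "\<And>i. 0 \<le> d i" and cd: "\<And>i. c + d i \<le> 1"
  shows "TV n (\<lambda>i j. theta_star n i j + lift_direction n c d i j)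
           \<le> n * (1 - c) + (\<Sum>i<n - 1. \<bar>d (Suc i) - d i\<bar>)"
proof -
  let ?m = "n div 2"
  define \<theta> where "\<theta> = (\<lambda>i j. theta_star n i j + lift_direction n c d i j)"
  have \<theta>: "\<theta> i j = (if ?m \<le> j then 1 else c) + (if j = ?m - 1 then d i else 0)"
    if "i < n" "j < n" for i j
    using that n by (auto simp: \<theta>_def theta_star_eq lift_direction_def)
  have "?m \<ge> 1" "?m < n" "?m - 1 < n" using n by auto
  have mono: "\<theta> i j \<le> \<theta> i (Suc j)" if "i < n" "Suc j < n" for i j
    using that \<theta> c d[of i] cd[of i] \<open>?m \<ge> 1\<close> by auto
  have ends: "\<theta> i (n - 1) - \<theta> i 0 \<le> 1 - c" if "i < n" for i
    using that \<theta> d[of i] \<open>?m \<ge> 1\<close> \<open>?m < n\<close> by auto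
  have cols: "(\<Sum>j<n. \<bar>\<theta> (Suc i) j - \<theta> i j\<bar>) = \<bar>d (Suc i) - d i\<bar>" if "Suc i < n" for i
  proof -
    have "(\<Sum>j<n. \<bar>\<theta> (Suc i) j - \<theta> i j\<bar>) = (\<Sum>j<n. if j = ?m - 1 then \<bar>d (Suc i) - d i\<bar> else 0)"
      using that \<theta> by (intro sum.cong) auto
    also have "\<dots> = \<bar>d (Suc i) - d i\<bar>"
      using \<open>?m - 1 < n\<close> by simp
    finally show ?thesis .
  qed
  have "TV n \<theta> = (\<Sum>i<n. \<theta> i (n - 1) - \<theta> i 0) + (\<Sum>i<n - 1. \<Sum>j<n. \<bar>\<theta> (Suc i) j - \<theta> i j\<bar>)"
    using mono by (rule TV_eq_if_rows_mono)
  also have "\<dots> \<le> (\<Sum>i<n. 1 - c) + (\<Sum>i<n - 1. \<bar>d (Suc i) - d i\<bar>)"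
    using ends cols by (intro add_mono sum_mono) auto
  finally show ?thesis by (simp add: \<theta>_def)
qed

lemma theta_star_plus_lift_direction_in_K:
  assumes "0 \<le> c" "\<And>i. 0 \<le> d i" "\<And>i. c + d i \<le> 1"
    and "(\<Sum>i<n - 1. \<bar>d (Suc i) - d i\<bar>) \<le> n * c"
  shows "(\<lambda>i j. theta_star n i j + lift_direction n c d i j) \<in> K n (TV n (theta_star n))"
proof -
  have "TV n (\<lambda>i j. theta_star n i j + lift_direction n c d i j) \<le> TV n (theta_star n)"
  proof (cases "2 \<le> n")
    case True
    have "TV n (\<lambda>i j. theta_star n i j + lift_direction n c d i j)
        \<le> n * (1 - c) + (\<Sum>i<n - 1. \<bar>d (Suc i) - d i\<bar>)"
      by (rule TV_theta_star_plus_lift_direction_le) (use True assms in auto)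
    then show ?thesis
      using assms(4) True by (simp add: TV_theta_star algebra_simps)
  next
    case False
    then have "n - 1 = 0" by simp
    then show ?thesis by (simp add: TV_def)
  qed
  moreover have "(\<lambda>i j. theta_star n i j + lift_direction n c d i j) \<in> mats n"
    using theta_star_in_mats lift_direction_in_mats unfolding mats_def by auto
  ultimately show ?thesis by (simp add: K_def)
qed

lemma feasible_direction_in_tangent_cone:
  assumes "v \<in> mats n" "(\<lambda>i j. \<theta>\<^sub>0 i j + v i j) \<in> K n V"
  shows "v \<in> tangent_cone n V \<theta>\<^sub>0"
proof -
  have "v \<in> cone_gen {\<theta> \<in> mats n. (\<lambda>i j. \<theta>\<^sub>0 i j + \<theta> i j) \<in> K n V}"
    unfolding cone_gen_def using assms by (intro CollectI exI[of _ 1] exI[of _ v]) auto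
  then show ?thesis
    using assms(1) unfolding tangent_cone_def mclosure_def
    by (auto intro!: bexI[of _ v] simp: frob_def)
qed

section \<open>The block witness\<close>

definition block_step :: "nat \<Rightarrow> nat \<Rightarrow> (nat \<Rightarrow> real) \<Rightarrow> nat \<Rightarrow> real" where
  "block_step r b g i = (if i < b * r then g (i div r) else 0)"

definition block_sum :: "nat \<Rightarrow> (nat \<Rightarrow> real) \<Rightarrow> nat \<Rightarrow> real" where
  "block_sum r z k = (\<Sum>i\<in>{k * r..<k * r + r}. z i)"

lemma block_step_Suc_eq:
  assumes "1 \<le> r" "i \<notin> (\<lambda>k. k * r + (r - 1)) ` {..<b}"
  shows "block_step r b g (Suc i) = block_step r b g i"
proof (cases "i < b * r")
  case True
  have "Suc i mod r \<noteq> 0"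
  proof
    assume "Suc i mod r = 0"
    then obtain k where k: "Suc i = k * r" by (metis mult.commute mod_eq_0_iff_dvd dvd_def)
    have "k * r \<le> b * r" using k True by linarith
    then have "k \<le> b" using assms(1) by simp
    obtain k' where "k = Suc k'" using k by (cases k) auto
    with k have "Suc i = r + k' * r" by simp
    then have "i = k' * r + (r - 1)" using assms(1) by linarith
    moreover have "k' < b" using \<open>k \<le> b\<close> \<open>k = Suc k'\<close> by simp
    ultimately show False using assms(2) by blast
  qed
  moreover have "Suc i \<noteq> b * r"
    using calculation by (metis mod_mult_self1_is_0 mult.commute)
  ultimately have "Suc i div r = i div r" "Suc i < b * r"
    using True by (simp_all add: div_Suc)
  then show ?thesis by (simp add: block_step_def True)
next
  case False
  then show ?thesis by (simp add: block_step_def)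
qed

lemma sum_abs_diff_block_step_le:
  assumes "1 \<le> r" "\<And>k. 0 \<le> g k \<and> g k \<le> 1"
  shows "(\<Sum>i<N. \<bar>block_step r b g (Suc i) - block_step r b g i\<bar>) \<le> b"
proof -
  define X where "X = (\<lambda>k. k * r + (r - 1)) ` {..<b}"
  have bounds: "0 \<le> block_step r b g i \<and> block_step r b g i \<le> 1" for i
    using assms(2) by (simp add: block_step_def)
  have "\<bar>block_step r b g (Suc i) - block_step r b g i\<bar> \<le> (if i \<in> X then 1 else 0)" for i
  proof (cases "i \<in> X")
    case True
    have "\<bar>block_step r b g (Suc i) - block_step r b g i\<bar> \<le> 1"
      using bounds[of i] bounds[of "Suc i"] by linarith
    then show ?thesis using True by simp
  next
    case False
    then show ?thesis using block_step_Suc_eq[OF assms(1), of i b g] by (simp add: X_def)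
  qed
  then have "(\<Sum>i<N. \<bar>block_step r b g (Suc i) - block_step r b g i\<bar>) \<le> (\<Sum>i<N. if i \<in> X then 1 else 0)"
    by (intro sum_mono)
  also have "\<dots> = real (card ({..<N} \<inter> X))"
    by (simp add: sum.If_cases)
  also have "\<dots> \<le> real (card X)"
    by (intro of_nat_mono card_mono) (auto simp: X_def)
  also have "\<dots> \<le> real b"
    unfolding X_def using card_image_le[of "{..<b}"] by simp
  finally show ?thesis .
qed

lemma sum_block_step_mult:
  assumes "b * r \<le> N"
  shows "(\<Sum>i<N. block_step r b g i * z i) = (\<Sum>k<b. g k * block_sum r z k)"
proof -
  have "(\<Sum>i<N. block_step r b g i * z i) = (\<Sum>i<b * r. block_step r b g i * z i)"
    using assms by (intro sum.mono_neutral_right) (auto simp: block_step_def)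
  also have "\<dots> = (\<Sum>k<b. \<Sum>i\<in>{k * r..<k * r + r}. block_step r b g i * z i)"
    by (rule sum.nat_group[symmetric])
  also have "\<dots> = (\<Sum>k<b. g k * block_sum r z k)"
  proof (intro sum.cong refl)
    fix k assume "k \<in> {..<b}"
    then have "Suc k * r \<le> b * r" by (intro mult_le_mono1) simp
    then have "k * r + r \<le> b * r" by simp
    moreover have "i div r = k" if "i \<in> {k * r..<k * r + r}" for i
      using that by (intro div_nat_eqI) (auto simp: algebra_simps)
    ultimately show "(\<Sum>i\<in>{k * r..<k * r + r}. block_step r b g i * z i) = g k * block_sum r z k"
      unfolding block_sum_def sum_distrib_left by (intro sum.cong) (auto simp: block_step_def)
  qed
  finally show ?thesis .
qed

lemma sum_lessThan_if_less:
  fixes m n :: nat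
  assumes "m \<le> n"
  shows "(\<Sum>j<n. if j < m then f j else 0) = (\<Sum>j<m. f j)"
  by (rule sum.mono_neutral_cong_right) (use assms in auto)

lemma pairing_lift_direction:
  assumes "1 \<le> n"
  shows "pairing n Z (lift_direction n c d)
           = c * (\<Sum>i<n. \<Sum>j<n div 2. Z (i, j)) + (\<Sum>i<n. d i * Z (i, n div 2 - 1))"
proof -
  have "(\<Sum>j<n. Z (i, j) * lift_direction n c d i j) = c * (\<Sum>j<n div 2. Z (i, j)) + d i * Z (i, n div 2 - 1)"
    if "i < n" for i
  proof -
    have "(\<Sum>j<n. Z (i, j) * lift_direction n c d i j)
        = (\<Sum>j<n. (if j < n div 2 then c * Z (i, j) else 0)
                 + (if j = n div 2 - 1 then d i * Z (i, n div 2 - 1) else 0))"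
      using that by (intro sum.cong) (auto simp: lift_direction_def algebra_simps)
    also have "\<dots> = c * (\<Sum>j<n div 2. Z (i, j)) + d i * Z (i, n div 2 - 1)"
      using assms by (simp add: sum.distrib sum_lessThan_if_less sum_distrib_left)
    finally show ?thesis .
  qed
  then show ?thesis
    unfolding pairing_def by (simp add: sum.distrib sum_distrib_left)
qed

lemma lift_direction_in_unit_ball:
  assumes "\<And>i. \<bar>d i\<bar> \<le> \<delta>" "real n * (real n * c\<^sup>2 + 2 * \<delta>\<^sup>2) \<le> 1"
  shows "lift_direction n c d \<in> unit_ball n"
proof -
  have row: "(\<Sum>j<n. (lift_direction n c d i j)\<^sup>2) \<le> real n * c\<^sup>2 + 2 * \<delta>\<^sup>2" if "i < n" for i
  proof -
    have "(\<Sum>j<n. (lift_direction n c d i j)\<^sup>2)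
        \<le> (\<Sum>j<n. 2 * (if j < n div 2 then c\<^sup>2 else 0) + 2 * (if j = n div 2 - 1 then (d i)\<^sup>2 else 0))"
    proof (intro sum_mono)
      fix j
      have "(x + y)\<^sup>2 \<le> 2 * x\<^sup>2 + 2 * y\<^sup>2" for x y :: real
        using zero_le_power2[of "x - y"] by (simp add: power2_eq_square algebra_simps)
      then show "(lift_direction n c d i j)\<^sup>2
          \<le> 2 * (if j < n div 2 then c\<^sup>2 else 0) + 2 * (if j = n div 2 - 1 then (d i)\<^sup>2 else 0)"
        using that by (auto simp: lift_direction_def)
    qed
    also have "\<dots> = 2 * real (n div 2) * c\<^sup>2 + 2 * (d i)\<^sup>2"
      using that by (simp add: sum.distrib sum_lessThan_if_less flip: sum_distrib_left)
    also have "\<dots> \<le> real n * c\<^sup>2 + 2 * \<delta>\<^sup>2"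
    proof (intro add_mono mult_right_mono mult_left_mono)
      show "2 * real (n div 2) \<le> real n" by linarith
      show "(d i)\<^sup>2 \<le> \<delta>\<^sup>2"
        using power_mono[OF assms(1)[of i], of 2] by simp
    qed simp_all
    finally show ?thesis .
  qed
  have "(\<Sum>i<n. \<Sum>j<n. (lift_direction n c d i j)\<^sup>2) \<le> (\<Sum>i<n. real n * c\<^sup>2 + 2 * \<delta>\<^sup>2)"
    using row by (intro sum_mono) auto
  also have "\<dots> \<le> 1" using assms(2) by simp
  finally show ?thesis
    by (simp add: unit_ball_def frob_def lift_direction_in_mats)
qed

definition block_witness :: "nat \<Rightarrow> nat \<Rightarrow> (nat \<times> nat \<Rightarrow> real) \<Rightarrow> nat \<Rightarrow> nat \<Rightarrow> real" where
  "block_witness n r Z = lift_direction n (real (n div r) / (3 * real n * sqrt n))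
     (\<lambda>i. block_step r (n div r) (\<lambda>k. of_bool (0 < block_sum r (\<lambda>i. Z (i, n div 2 - 1)) k)) i
           / (3 * sqrt n))"

lemma block_witness_in_tangent_cone:
  assumes n: "1 \<le> n" and r: "1 \<le> r"
  shows "block_witness n r Z \<in> tangent_cone n (TV n (theta_star n)) (theta_star n)"
proof -
  define D where "D = 3 * sqrt n"
  define c where "c = real (n div r) / (3 * real n * sqrt n)"
  define e where "e = block_step r (n div r) (\<lambda>k. of_bool (0 < block_sum r (\<lambda>i. Z (i, n div 2 - 1)) k))"
  have w: "block_witness n r Z = lift_direction n c (\<lambda>i. e i / D)"
    by (simp add: block_witness_def c_def e_def D_def)
  have D3: "3 \<le> D" using n by (simp add: D_def)
  have e: "0 \<le> e i \<and> e i \<le> 1" for i by (simp add: e_def block_step_def)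
  have "c \<le> 1 / D"
    using n by (simp add: c_def D_def field_simps)
  moreover have "e i / D \<le> 1 / D" for i
    using e[of i] D3 by (intro divide_right_mono) auto
  moreover have "1 / D + 1 / D \<le> 1" using D3 by simp
  ultimately have c_e: "c + e i / D \<le> 1" for i
    by (meson add_mono order_trans)
  have "(\<Sum>i<n - 1. \<bar>e (Suc i) / D - e i / D\<bar>) = (\<Sum>i<n - 1. \<bar>e (Suc i) - e i\<bar>) / D"
    using D3 by (simp add: sum_divide_distrib flip: diff_divide_distrib)
  also have "\<dots> \<le> (n div r) / D"
    unfolding e_def using sum_abs_diff_block_step_le[OF r] D3 by (intro divide_right_mono) auto
  also have "\<dots> = n * c"
    using n by (simp add: c_def D_def)
  finally have "(\<Sum>i<n - 1. \<bar>e (Suc i) / D - e i / D\<bar>) \<le> n * c" .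
  moreover have "0 \<le> c" by (simp add: c_def D_def)
  ultimately have "(\<lambda>i j. theta_star n i j + lift_direction n c (\<lambda>i. e i / D) i j) \<in> K n (TV n (theta_star n))"
    using e D3 c_e by (intro theta_star_plus_lift_direction_in_K) auto
  then show ?thesis
    unfolding w by (intro feasible_direction_in_tangent_cone lift_direction_in_mats)
qed

lemma pairing_block_witness:
  assumes "1 \<le> n"
  shows "pairing n Z (block_witness n r Z)
           = real (n div r) / (3 * real n * sqrt n) * (\<Sum>i<n. \<Sum>j<n div 2. Z (i, j))
             + (\<Sum>k<n div r. max (block_sum r (\<lambda>i. Z (i, n div 2 - 1)) k) 0) / (3 * sqrt n)"
proof -
  let ?z = "\<lambda>i. Z (i, n div 2 - 1)"
  have "(\<Sum>i<n. block_step r (n div r) (\<lambda>k. of_bool (0 < block_sum r ?z k)) i * ?z i)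
      = (\<Sum>k<n div r. of_bool (0 < block_sum r ?z k) * block_sum r ?z k)"
    by (intro sum_block_step_mult) simp
  also have "\<dots> = (\<Sum>k<n div r. max (block_sum r ?z k) 0)"
    by (intro sum.cong) auto
  finally show ?thesis
    using assms by (simp add: block_witness_def pairing_lift_direction sum_divide_distrib[symmetric])
qed

lemma block_sum_column_eq:
  "block_sum r (\<lambda>i. Z (i, j)) k = (\<Sum>x\<in>(\<lambda>i. (i, j)) ` {k * r..<k * r + r}. Z x)"
  unfolding block_sum_def by (subst sum.reindex) (auto simp: inj_on_def)

lemma integral_pairing_block_witness:
  assumes n: "1 \<le> n" and r: "1 \<le> r"
  shows "integrable (gauss_matrix n) (\<lambda>Z. pairing n Z (block_witness n r Z))"
    and "(\<integral>Z. pairing n Z (block_witness n r Z) \<partial>gauss_matrix n)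
           = real (n div r) * sqrt r * sqrt (2/pi) / (6 * sqrt n)"
proof -
  let ?I = "{..<n} \<times> {..<n}" and ?b = "n div r" and ?j = "n div 2 - 1"
  let ?M = "PiM ?I (\<lambda>_. std_normal_distribution)"
  let ?S = "\<lambda>Z. \<Sum>i<n. \<Sum>j<n div 2. Z (i, j)"
  let ?P = "\<lambda>Z. \<Sum>k<?b. max (block_sum r (\<lambda>i. Z (i, ?j)) k) 0"
  define J where "J k = (\<lambda>i. (i, ?j)) ` {k * r..<k * r + r}" for k
  have J: "J k \<subseteq> ?I" "J k \<noteq> {}" "card (J k) = r" if "k < ?b" for k
  proof -
    have "Suc k * r \<le> ?b * r" using that by (intro mult_le_mono1) simp
    then have "k * r + r \<le> n" using div_times_less_eq_dividend[of n r] by (simp only: mult_Suc)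
    then show "J k \<subseteq> ?I" using n by (auto simp: J_def)
    show "J k \<noteq> {}" using r by (simp add: J_def)
    show "card (J k) = r" by (simp add: J_def card_image inj_on_def)
  qed
  have blocks: "integrable ?M (\<lambda>Z. max (block_sum r (\<lambda>i. Z (i, ?j)) k) 0)"
      "(\<integral>Z. max (block_sum r (\<lambda>i. Z (i, ?j)) k) 0 \<partial>?M) = sqrt r * sqrt (2/pi) / 2"
    if "k < ?b" for k
    using PiM_std_normal_pos_part_sum[of ?I "J k"] J[OF that]
    by (simp_all add: block_sum_column_eq J_def)
  have coords: "integrable ?M (\<lambda>Z. Z (i, j))" "(\<integral>Z. Z (i, j) \<partial>?M) = 0"
    if "i < n" "j < n div 2" for i j
    using PiM_std_normal_component[of ?I "(i, j)"] that by auto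
  have int_S: "integrable ?M ?S"
    using coords(1) by (intro Bochner_Integration.integrable_sum) auto
  have int_P: "integrable ?M ?P"
    using blocks(1) by (intro Bochner_Integration.integrable_sum) auto
  have S: "integral\<^sup>L ?M ?S = 0"
    using coords
    by (subst Bochner_Integration.integral_sum, intro Bochner_Integration.integrable_sum, auto)+
  have P: "integral\<^sup>L ?M ?P = ?b * (sqrt r * sqrt (2/pi) / 2)"
  proof -
    have "integral\<^sup>L ?M ?P = (\<Sum>k<?b. \<integral>Z. max (block_sum r (\<lambda>i. Z (i, ?j)) k) 0 \<partial>?M)"
      using blocks(1) by (intro Bochner_Integration.integral_sum) auto
    also have "\<dots> = (\<Sum>k<?b. sqrt r * sqrt (2/pi) / 2)"
      using blocks(2) by (intro sum.cong) auto
    finally show ?thesis by simp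
  qed
  have pairing_eq: "(\<lambda>Z. pairing n Z (block_witness n r Z))
      = (\<lambda>Z. real ?b / (3 * real n * sqrt n) * ?S Z + ?P Z / (3 * sqrt n))"
    using pairing_block_witness[OF n] by auto
  show "integrable (gauss_matrix n) (\<lambda>Z. pairing n Z (block_witness n r Z))"
    using int_S int_P by (simp add: pairing_eq gauss_matrix_def)
  have "(\<integral>Z. pairing n Z (block_witness n r Z) \<partial>gauss_matrix n)
      = real ?b / (3 * real n * sqrt n) * integral\<^sup>L ?M ?S + integral\<^sup>L ?M ?P / (3 * sqrt n)"
    using int_S int_P by (simp add: pairing_eq gauss_matrix_def)
  also have "\<dots> = real (n div r) * sqrt r * sqrt (2/pi) / (6 * sqrt n)"
    unfolding S P by simp
  finally show "(\<integral>Z. pairing n Z (block_witness n r Z) \<partial>gauss_matrix n)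
      = real (n div r) * sqrt r * sqrt (2/pi) / (6 * sqrt n)" .
qed

lemma block_witness_in_unit_ball:
  assumes n: "1 \<le> n" and b: "(n div r)\<^sup>2 \<le> 7 * n"
  shows "block_witness n r Z \<in> unit_ball n"
  unfolding block_witness_def
proof (rule lift_direction_in_unit_ball[where \<delta> = "1 / (3 * sqrt n)"])
  let ?D = "3 * sqrt n"
  show "\<bar>block_step r (n div r) (\<lambda>k. of_bool (0 < block_sum r (\<lambda>i. Z (i, n div 2 - 1)) k)) i / ?D\<bar>
      \<le> 1 / ?D" for i
    by (simp add: block_step_def)
  have "real n * (real n * (real (n div r) / (3 * real n * sqrt n))\<^sup>2) = real ((n div r)\<^sup>2) / (9 * n)"
    using n by (simp add: power_divide power_mult_distrib) (simp add: field_simps power2_eq_square)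
  also have "\<dots> \<le> 7 / 9"
    using n of_nat_le_iff[of "(n div r)\<^sup>2" "7 * n"] b by (simp add: field_simps)
  finally have "real n * (real n * (real (n div r) / (3 * real n * sqrt n))\<^sup>2) \<le> 7 / 9" .
  moreover have "real n * (2 * (1 / ?D)\<^sup>2) = 2 / 9"
    using n by (simp add: power_divide power_mult_distrib)
  ultimately show "real n * (real n * (real (n div r) / (3 * real n * sqrt n))\<^sup>2 + 2 * (1 / ?D)\<^sup>2) \<le> 1"
    unfolding distrib_left by linarith
qed

lemma floor_sqrt_block_bounds:
  assumes "1 \<le> n"
  shows "1 \<le> floor_sqrt n"
    and "(n div floor_sqrt n)\<^sup>2 \<le> 4 * n"
    and "n \<le> 2 * (n div floor_sqrt n) * floor_sqrt n"
proof -
  let ?r = "floor_sqrt n" and ?b = "n div floor_sqrt n"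
  show r: "1 \<le> ?r" using assms by (simp add: Suc_le_eq)
  have "?b * ?r \<le> n" by simp
  have "n < 4 * ?r\<^sup>2"
  proof -
    have "Suc ?r \<le> 2 * ?r" using r by simp
    then have "(Suc ?r)\<^sup>2 \<le> (2 * ?r)\<^sup>2" by (rule power_mono) simp
    then show ?thesis using Suc_floor_sqrt_power2_gt[of n] by (simp add: power_mult_distrib)
  qed
  have "(?b * ?r)\<^sup>2 \<le> n\<^sup>2"
    using \<open>?b * ?r \<le> n\<close> by (rule power_mono) simp
  then have "?b\<^sup>2 * ?r\<^sup>2 \<le> n * n"
    by (simp add: power_mult_distrib power2_eq_square[of n])
  also have "\<dots> \<le> (4 * n) * ?r\<^sup>2"
    using \<open>n < 4 * ?r\<^sup>2\<close> by simp
  finally show "?b\<^sup>2 \<le> 4 * n"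
    using r assms by simp
  have "0 < ?r" using r by linarith
  then have "?r \<le> ?b"
    using floor_sqrt_power2_le[of n] by (simp add: power2_eq_square less_eq_div_iff_mult_less_eq)
  moreover have "n mod ?r < ?r" using \<open>0 < ?r\<close> by (rule mod_less_divisor)
  moreover have "n = ?b * ?r + n mod ?r" by simp
  moreover have "?r \<le> ?b * ?r" using r \<open>?r \<le> ?b\<close> by simp
  ultimately show "n \<le> 2 * ?b * ?r"
    by linarith
qed

lemma powr_quarter_le_floor_sqrt_blocks:
  assumes "1 \<le> n"
  shows "real n powr (1/4) * sqrt n \<le> 2 * real (n div floor_sqrt n) * sqrt (floor_sqrt n)"
proof -
  let ?r = "real (floor_sqrt n)" and ?b = "real (n div floor_sqrt n)" and ?q = "real n powr (1/4)"
  have r: "1 \<le> ?r" using floor_sqrt_block_bounds(1)[OF assms] by simp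
  have "?q * ?q = real n powr (1/4 + 1/4)"
    by (rule powr_add[symmetric])
  then have q2: "?q * ?q = sqrt n"
    by (simp add: powr_half_sqrt)
  have "?r\<^sup>2 \<le> real n"
    using floor_sqrt_power2_le[of n] by (metis of_nat_le_iff of_nat_power)
  then have "(sqrt ?r)\<^sup>2 \<le> ?q\<^sup>2"
    using q2 real_le_rsqrt by (simp add: power2_eq_square)
  then have "sqrt ?r \<le> ?q"
    by (rule power2_le_imp_le) simp
  then have "?q * sqrt n * sqrt ?r \<le> ?q * sqrt n * ?q"
    by (intro mult_left_mono) auto
  also have "\<dots> = n"
    using q2 by (simp add: algebra_simps)
  also have "\<dots> \<le> 2 * ?b * ?r"
    using floor_sqrt_block_bounds(3)[OF assms] of_nat_le_iff by (metis of_nat_mult of_nat_numeral)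
  also have "\<dots> = 2 * ?b * sqrt ?r * sqrt ?r"
    using r by simp
  finally show ?thesis
    using r assms by (simp add: mult_le_cancel_right)
qed

theorem lemma5p4:
  shows "\<exists>c>0. \<forall>n\<ge>1.
     GW n (tangent_cone n (TV n (theta_star n)) (theta_star n) \<inter> unit_ball n)
       \<ge> c * real n powr (1/4)"
proof (intro exI[of _ "sqrt (2/pi) / 12"] conjI allI impI)
  fix n :: nat
  assume n: "1 \<le> n"
  define r where "r = floor_sqrt n"
  let ?A = "tangent_cone n (TV n (theta_star n)) (theta_star n) \<inter> unit_ball n"
  have r: "1 \<le> r" and blocks: "(n div r)\<^sup>2 \<le> 7 * n"
    using floor_sqrt_block_bounds[OF n] by (auto simp: r_def)
  have "block_witness n r Z \<in> ?A" for Z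
    using block_witness_in_tangent_cone[OF n r] block_witness_in_unit_ball[OF n blocks] by simp
  then have GW: "(\<integral>Z. pairing n Z (block_witness n r Z) \<partial>gauss_matrix n) \<le> GW n ?A"
    using integral_pairing_block_witness(1)[OF n r] by (intro GW_ge_integral_pairing) auto
  have "sqrt (2/pi) / 12 * real n powr (1/4)
      = sqrt (2/pi) / (12 * sqrt n) * (real n powr (1/4) * sqrt n)"
    using n by simp
  also have "\<dots> \<le> sqrt (2/pi) / (12 * sqrt n) * (2 * real (n div r) * sqrt r)"
    using powr_quarter_le_floor_sqrt_blocks[OF n] by (intro mult_left_mono) (auto simp: r_def)
  also have "\<dots> = (\<integral>Z. pairing n Z (block_witness n r Z) \<partial>gauss_matrix n)"
    by (simp add: integral_pairing_block_witness(2)[OF n r])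
  finally show "sqrt (2/pi) / 12 * real n powr (1/4) \<le> GW n ?A"
    using GW by linarith
qed simp

end
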